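(* Assume $k>1$. (1) $r=e-k$ if and only if $v(R)\setminus v(xR:\mathfrak m)=\{0,y_1,\dots,y_{k-1}\}$. (2) If $r<e-1$, then (a) $2y_1<c+e$, and (b) $p\le 2l_1+2$, and $p=2l_1+2$ implies $h>0$. (3) If $r=e-k$, then (a) $y_1+y_j<c+e$ for every $j=1,\dots,k-1$, and (b) $p\le l_1+l_{k-1}+2$, and $p=l_1+l_{k-1}+2$ implies $h>0$. (4) If $p\ge3$ and $i$ is such that $l_i=0$, then $2y_i>c+e$.
   Context: Let $(R,\mathfrak m)$ be a one-dimensional local Noetherian domain with quotient field $K$, not regular, analytically irreducible (the integral closure $\overline R$ of $R$ in $K$ is a DVR and a finite $R$-module) and residually rational. Let $v$ be the valuation of $\overline R$ normalized so a uniformizer $t$ has value 1, $v(R)=\{v(a):a\in R\setminus\{0\}\}$, $\mathfrak C=(R:_K\overline R)=t^c\overline R$ with $c$ the least element of $v(R)$ with $c+\mathbb N\subseteq v(R)$, $r=\ell_R((R:_K\mathfrak m)/R)$, $e$ the least positive element of $v(R)$. Let $x\in\mathfrak m$ with $v(x)=e$, $k=\ell_R(R/(\mathfrak C+xR))$, $(xR:\mathfrak m)=\{a\in K:a\mathfrak m\subseteq xR\}$ (an ideal of $R$) with value set $v(xR:\mathfrak m)$. When $k>1$: $p$ is the integer with $c-e\le pe<c$, $h=(p+1)e-c$; $y_1<\dots<y_{k-1}$ are the nonzero elements of $v(R)\setminus v(\mathfrak C+xR)$ (equivalently the $y\in v(R)$ with $0<y<c$ and $y-e\notin v(R)$); $l_i\ge0$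 is the integer with $y_i+l_ie<c\le y_i+(l_i+1)e$. *)

theory Defs
  imports "HOL-Computational_Algebra.Polynomial"
begin

text \<open>The ambient field K is the whole type 'a; R is a subset of it. All sets below are
subsets of K. v is the normalized discrete valuation of K (its value at 0 is irrelevant).\<close>

definition subring :: "'a::field set \<Rightarrow> bool" where
  "subring R \<longleftrightarrow> 0 \<in> R \<and> 1 \<in> R \<and> (\<forall>a\<in>R. \<forall>b\<in>R. a + b \<in> R \<and> a * b \<in> R \<and> - a \<in> R)"

definition submod :: "'a::field set \<Rightarrow> 'a set \<Rightarrow> bool" where
  "submod R M \<longleftrightarrow> 0 \<in> M \<and> (\<forall>a\<in>M. \<forall>b\<in>M. a + b \<in> M) \<and> (\<forall>r\<in>R. \<forall>a\<in>M. r * a \<in> M)"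

definition ideal_of :: "'a::field set \<Rightarrow> 'a set \<Rightarrow> bool" where
  "ideal_of R I \<longleftrightarrow> I \<subseteq> R \<and> submod R I"

definition prime_ideal_of :: "'a::field set \<Rightarrow> 'a set \<Rightarrow> bool" where
  "prime_ideal_of R P \<longleftrightarrow> ideal_of R P \<and> P \<noteq> R \<and> (\<forall>a\<in>R. \<forall>b\<in>R. a * b \<in> P \<longrightarrow> a \<in> P \<or> b \<in> P)"

definition gen_by :: "'a::field set \<Rightarrow> 'a set \<Rightarrow> 'a set" where
  "gen_by R F = {(\<Sum>f\<in>F. g f * f) | g. \<forall>f\<in>F. g f \<in> R}"

definition noetherian :: "'a::field set \<Rightarrow> bool" where
  "noetherian R \<longleftrightarrow> (\<forall>I. ideal_of R I \<longrightarrow> (\<exists>F. finite F \<and> F \<subseteq> I \<and> I = gen_by R F))"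

definition krull_dim_one :: "'a::field set \<Rightarrow> bool" where
  "krull_dim_one R \<longleftrightarrow>
     (\<exists>P0 P1. prime_ideal_of R P0 \<and> prime_ideal_of R P1 \<and> P0 \<subset> P1) \<and>
     \<not> (\<exists>P0 P1 P2. prime_ideal_of R P0 \<and> prime_ideal_of R P1 \<and> prime_ideal_of R P2 \<and>
           P0 \<subset> P1 \<and> P1 \<subset> P2)"

definition local_ring :: "'a::field set \<Rightarrow> 'a set \<Rightarrow> bool" where
  "local_ring R m \<longleftrightarrow> ideal_of R m \<and> m \<noteq> R \<and> (\<forall>a\<in>R - m. \<exists>b\<in>R. a * b = 1)"

definition quotient_field_is_K :: "'a::field set \<Rightarrow> bool" where
  "quotient_field_is_K R \<longleftrightarrow> (\<forall>a. \<exists>b\<in>R. \<exists>d\<in>R. d \<noteq> 0 \<and> a = b / d)"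

definition integral_over :: "'a::field set \<Rightarrow> 'a \<Rightarrow> bool" where
  "integral_over R a \<longleftrightarrow> (\<exists>p. lead_coeff p = 1 \<and> (\<forall>i. coeff p i \<in> R) \<and> poly p a = 0)"

definition discrete_valuation :: "('a::field \<Rightarrow> int) \<Rightarrow> bool" where
  "discrete_valuation v \<longleftrightarrow>
     (\<forall>a b. a \<noteq> 0 \<longrightarrow> b \<noteq> 0 \<longrightarrow> v (a * b) = v a + v b) \<and>
     (\<forall>a b. a \<noteq> 0 \<longrightarrow> b \<noteq> 0 \<longrightarrow> a + b \<noteq> 0 \<longrightarrow> min (v a) (v b) \<le> v (a + b)) \<and>
     (\<exists>t. t \<noteq> 0 \<and> v t = 1)"

definition val_ring :: "('a::field \<Rightarrow> int) \<Rightarrow> 'a set" where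
  "val_ring v = {a. a = 0 \<or> 0 \<le> v a}"

text \<open>residually rational: the residue field of R equals that of the valuation ring\<close>
definition residually_rational :: "'a::field set \<Rightarrow> ('a \<Rightarrow> int) \<Rightarrow> bool" where
  "residually_rational R v \<longleftrightarrow> (\<forall>a\<in>val_ring v. \<exists>b\<in>R. a = b \<or> 0 < v (a - b))"

definition valset :: "('a::field \<Rightarrow> int) \<Rightarrow> 'a set \<Rightarrow> int set" where
  "valset v A = {v a | a. a \<in> A \<and> a \<noteq> 0}"

definition colon :: "'a::field set \<Rightarrow> 'a set \<Rightarrow> 'a set" where
  "colon A B = {a. \<forall>b\<in>B. a * b \<in> A}"

definition smul_set :: "'a::field \<Rightarrow> 'a set \<Rightarrow> 'a set" where
  "smul_set x A = {x * a | a. a \<in> A}"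

definition sum_set :: "'a::field set \<Rightarrow> 'a set \<Rightarrow> 'a set" where
  "sum_set A B = {a + b | a b. a \<in> A \<and> b \<in> B}"

definition mod_length :: "'a::field set \<Rightarrow> 'a set \<Rightarrow> 'a set \<Rightarrow> nat" where
  "mod_length R B A = Sup {n. \<exists>L::nat \<Rightarrow> 'a set. L 0 = A \<and> L n = B \<and>
       (\<forall>i\<le>n. submod R (L i)) \<and> (\<forall>i<n. L i \<subset> L (Suc i))}"

end

theory Submission
  imports Defs
begin

text \<open>Write S = v(R). Between two R-submodules of K that contain the conductor, the length of the
quotient is the number of values that the larger module has and the smaller one lacks: residual
rationality lets one strip off leading terms one value at a time. Hence r = \<bar>v(R:m) - S\<bar> and
k = \<bar>S - v(C + xR)\<bar>. The Apery set of S with respect to e has exactly e elements and splits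
into S - v(xR:m) and e + (v(R:m) - S), so \<bar>S - v(xR:m)\<bar> = e - r, while the gaps y_i are the
positive Apery elements below c. The arithmetic heart of the proposition is that an element
y \<in> S with y + y_j \<ge> c + e for all j lies in v(xR:m), since then (b/x) m \<subseteq> R for any b \<in> R
of value y.\<close>

lemma Least_int_nonneg:
  assumes "P (n0::int)" and "\<And>n. P n \<Longrightarrow> 0 \<le> n"
  shows "P (LEAST n. P n)" and "\<And>n. P n \<Longrightarrow> (LEAST n. P n) \<le> n"
proof -
  have ex: "\<exists>k::nat. P (int k)" using assms by (metis nonneg_int_cases)
  define k0 where "k0 = (LEAST k::nat. P (int k))"
  have P0: "P (int k0)" unfolding k0_def by (rule LeastI_ex[OF ex])
  have le: "int k0 \<le> n" if "P n" for n
  proof -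
    obtain k where "n = int k" using assms(2) \<open>P n\<close> by (metis nonneg_int_cases)
    with \<open>P n\<close> have "k0 \<le> k" unfolding k0_def by (simp add: Least_le)
    thus ?thesis using \<open>n = int k\<close> by simp
  qed
  have "(LEAST n. P n) = int k0"
    by (rule Least_equality) (use P0 le in auto)
  thus "P (LEAST n. P n)" and "\<And>n. P n \<Longrightarrow> (LEAST n. P n) \<le> n" using P0 le by simp_all
qed

lemma valset_iff: "n \<in> valset v X \<longleftrightarrow> (\<exists>a\<in>X. a \<noteq> 0 \<and> v a = n)"
  unfolding valset_def by auto

lemma valset_mono: "X \<subseteq> Y \<Longrightarrow> valset v X \<subseteq> valset v Y"
  unfolding valset_def by auto

definition val_ge :: "('a::field \<Rightarrow> int) \<Rightarrow> int \<Rightarrow> 'a set" where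
  "val_ge v T = {z. z = 0 \<or> T \<le> v z}"

lemma val_ge_antimono: "T \<le> T' \<Longrightarrow> val_ge v T' \<subseteq> val_ge v T"
  unfolding val_ge_def by auto

locale discrete_val =
  fixes v :: "'a::field \<Rightarrow> int"
  assumes discrete_val: "discrete_valuation v"
begin

lemma val_mult: "a \<noteq> 0 \<Longrightarrow> b \<noteq> 0 \<Longrightarrow> v (a * b) = v a + v b"
  using discrete_val unfolding discrete_valuation_def by blast

lemma val_add_ge_min: "a \<noteq> 0 \<Longrightarrow> b \<noteq> 0 \<Longrightarrow> a + b \<noteq> 0 \<Longrightarrow> min (v a) (v b) \<le> v (a + b)"
  using discrete_val unfolding discrete_valuation_def by blast

lemma val_one: "v 1 = 0"
  using val_mult[of 1 1] by simp

lemma val_inverse: "a \<noteq> 0 \<Longrightarrow> v (inverse a) = - v a"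
  using val_mult[of a "inverse a"] val_one by simp

lemma val_divide: "a \<noteq> 0 \<Longrightarrow> b \<noteq> 0 \<Longrightarrow> v (a / b) = v a - v b"
  by (simp add: divide_inverse val_mult val_inverse)

lemma val_uminus:
  assumes "a \<noteq> 0"
  shows "v (- a) = v a"
proof -
  have "v (-1) = 0" using val_mult[of "-1" "-1"] val_one by simp
  thus ?thesis using val_mult[of "-1" a] assms by simp
qed

lemma val_power: "a \<noteq> 0 \<Longrightarrow> v (a ^ n) = int n * v a"
  by (induction n) (auto simp: val_mult val_one algebra_simps)

lemma val_diff_ge_min: "a \<noteq> 0 \<Longrightarrow> b \<noteq> 0 \<Longrightarrow> a - b \<noteq> 0 \<Longrightarrow> min (v a) (v b) \<le> v (a - b)"
  using val_add_ge_min[of a "-b"] val_uminus[of b] by simp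

lemma val_add_eq_left:
  assumes "a \<noteq> 0" "b \<noteq> 0" "v a < v b"
  shows "a + b \<noteq> 0" and "v (a + b) = v a"
proof -
  show ab: "a + b \<noteq> 0"
  proof
    assume "a + b = 0"
    hence "b = - a" by (simp add: eq_neg_iff_add_eq_0 add.commute)
    thus False using assms val_uminus by simp
  qed
  have "min (v (a + b)) (v b) \<le> v a"
    using val_diff_ge_min[of "a + b" b] assms ab by simp
  thus "v (a + b) = v a" using val_add_ge_min assms ab by fastforce
qed

lemma ex_val_eq: "\<exists>a. a \<noteq> 0 \<and> v a = n"
proof -
  obtain t where t: "t \<noteq> 0" "v t = 1" using discrete_val unfolding discrete_valuation_def by blast
  show ?thesis
  proof (cases "0 \<le> n")
    case True
    thus ?thesis using t val_power[of t "nat n"] by (intro exI[of _ "t ^ nat n"]) auto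
  next
    case False
    thus ?thesis using t val_power[of t "nat (-n)"] val_inverse[of "t ^ nat (-n)"]
      by (intro exI[of _ "inverse (t ^ nat (-n))"]) auto
  qed
qed

lemma valset_val_ge: "valset v (val_ge v T) = {n. T \<le> n}"
proof
  show "valset v (val_ge v T) \<subseteq> {n. T \<le> n}" unfolding valset_def val_ge_def by auto
  show "{n. T \<le> n} \<subseteq> valset v (val_ge v T)"
  proof
    fix n assume "n \<in> {n. T \<le> n}"
    moreover obtain a where "a \<noteq> 0" "v a = n" using ex_val_eq by blast
    ultimately show "n \<in> valset v (val_ge v T)" unfolding valset_iff val_ge_def by force
  qed
qed

end

lemma submodD:
  assumes "submod R M"
  shows "0 \<in> M" and "a \<in> M \<Longrightarrow> b \<in> M \<Longrightarrow> a + b \<in> M" and "r \<in> R \<Longrightarrow> a \<in> M \<Longrightarrow> r * a \<in> M"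
  using assms unfolding submod_def by auto

lemma submod_Int: "submod R A \<Longrightarrow> submod R B \<Longrightarrow> submod R (A \<inter> B)"
  unfolding submod_def by auto

lemma submod_sum_set:
  assumes A: "submod R A" and B: "submod R B"
  shows "submod R (sum_set A B)"
  unfolding submod_def
proof (intro conjI ballI)
  show "0 \<in> sum_set A B" using submodD(1)[OF A] submodD(1)[OF B] unfolding sum_set_def by force
next
  fix z w assume "z \<in> sum_set A B" "w \<in> sum_set A B"
  then obtain a1 b1 a2 b2 where "z = a1 + b1" "w = a2 + b2" "a1 \<in> A" "a2 \<in> A" "b1 \<in> B" "b2 \<in> B"
    unfolding sum_set_def by blast
  hence "z + w = (a1 + a2) + (b1 + b2)" "a1 + a2 \<in> A" "b1 + b2 \<in> B"
    using submodD(2)[OF A] submodD(2)[OF B] by (auto simp: ac_simps)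
  thus "z + w \<in> sum_set A B" unfolding sum_set_def by blast
next
  fix r z assume r: "r \<in> R" and "z \<in> sum_set A B"
  then obtain a b where "z = a + b" "a \<in> A" "b \<in> B" unfolding sum_set_def by blast
  hence "r * z = r * a + r * b" "r * a \<in> A" "r * b \<in> B"
    using submodD(3)[OF A r] submodD(3)[OF B r] by (auto simp: algebra_simps)
  thus "r * z \<in> sum_set A B" unfolding sum_set_def by blast
qed

lemma strict_chain_mono:
  assumes "\<forall>i<n. L i \<subset> L (Suc i)" "i \<le> j" "j \<le> n"
  shows "L i \<subseteq> L j"
  using assms(2,3)
proof (induction j)
  case 0 thus ?case by simp
next
  case (Suc j)
  show ?case
  proof (cases "i = Suc j")
    case False
    hence "L i \<subseteq> L j" using Suc by simp
    moreover have "L j \<subset> L (Suc j)" using assms(1) Suc.prems by simp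
    ultimately show ?thesis by blast
  qed simp
qed

lemma floor_quotient_unique:
  fixes a e :: int
  assumes "0 < e"
  shows "\<exists>!q. a - e \<le> q * e \<and> q * e < a"
proof (rule ex1I)
  let ?q = "(a - 1) div e"
  show "a - e \<le> ?q * e \<and> ?q * e < a"
    using div_mult_mod_eq[of "a - 1" e] pos_mod_bound[OF assms, of "a - 1"]
      pos_mod_sign[OF assms, of "a - 1"] by linarith
  have le: "q \<le> q'" if "a - e \<le> q' * e" "q * e < a" for q q'
  proof -
    have "q * e < (q' + 1) * e" using that by (simp add: algebra_simps)
    thus ?thesis using assms by (simp add: mult_less_cancel_right)
  qed
  fix q assume "a - e \<le> q * e \<and> q * e < a"
  thus "q = ?q" using le \<open>a - e \<le> ?q * e \<and> ?q * e < a\<close> by (meson antisym)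
qed

lemma floor_quotient_offset:
  fixes c e y :: int
  assumes "0 < e" "y < c"
  defines "l \<equiv> THE l. 0 \<le> l \<and> y + l * e < c \<and> c \<le> y + (l + 1) * e"
  shows "0 \<le> l \<and> y + l * e < c \<and> c \<le> y + (l + 1) * e"
proof -
  have "0 \<le> l \<and> y + l * e < c \<and> c \<le> y + (l + 1) * e \<longleftrightarrow> (c - y) - e \<le> l * e \<and> l * e < c - y"
    for l
  proof
    assume l: "(c - y) - e \<le> l * e \<and> l * e < c - y"
    have "0 < (l + 1) * e" using l assms(2) by (simp add: algebra_simps)
    hence "0 \<le> l" using assms(1) by (simp add: zero_less_mult_iff)
    thus "0 \<le> l \<and> y + l * e < c \<and> c \<le> y + (l + 1) * e" using l by (simp add: algebra_simps)
  qed (simp add: algebra_simps)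
  hence "\<exists>!l. 0 \<le> l \<and> y + l * e < c \<and> c \<le> y + (l + 1) * e"
    using floor_quotient_unique[OF assms(1), of "c - y"] by presburger
  thus ?thesis unfolding l_def by (rule theI')
qed

lemma floor_quotient_le_sum:
  fixes e c p l1 l2 y1 y2 :: int
  assumes "0 < e" "p * e < c" "c \<le> y1 + (l1 + 1) * e" "c \<le> y2 + (l2 + 1) * e" "y1 + y2 < c + e"
  shows "p \<le> l1 + l2 + 2 \<and> (p = l1 + l2 + 2 \<longrightarrow> 0 < (p + 1) * e - c)"
proof -
  have c_lt: "c < (l1 + l2 + 3) * e" using assms(3-5) by (simp add: algebra_simps)
  hence "p * e < (l1 + l2 + 3) * e" using assms(2) by linarith
  hence "p \<le> l1 + l2 + 2" using assms(1) by (simp add: mult_less_cancel_right)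
  thus ?thesis using c_lt by (simp add: algebra_simps)
qed

lemma double_gt_if_floor_quotient_ge_3:
  fixes e c p y :: int
  assumes "0 < e" "3 \<le> p" "p * e < c" "c \<le> y + e"
  shows "c + e < 2 * y"
proof -
  have "3 * e \<le> p * e" using assms by (intro mult_right_mono) auto
  thus ?thesis using assms by linarith
qed

lemma sorted_list_of_set_nth_image:
  assumes "finite Y"
  shows "(\<lambda>i. sorted_list_of_set Y ! (i - 1)) ` {1..card Y} = Y"
proof
  let ?L = "sorted_list_of_set Y"
  have len: "length ?L = card Y" and set: "set ?L = Y" using assms by simp_all
  show "(\<lambda>i. ?L ! (i - 1)) ` {1..card Y} \<subseteq> Y"
  proof
    fix s assume "s \<in> (\<lambda>i. ?L ! (i - 1)) ` {1..card Y}"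
    then obtain i where "i \<in> {1..card Y}" "s = ?L ! (i - 1)" by blast
    hence "i - 1 < length ?L" "s = ?L ! (i - 1)" using len by auto
    thus "s \<in> Y" using set nth_mem by blast
  qed
  show "Y \<subseteq> (\<lambda>i. ?L ! (i - 1)) ` {1..card Y}"
  proof
    fix s assume "s \<in> Y"
    then obtain j where "j < length ?L" "?L ! j = s" using set by (metis in_set_conv_nth)
    thus "s \<in> (\<lambda>i. ?L ! (i - 1)) ` {1..card Y}" using len by (intro image_eqI[of _ _ "Suc j"]) auto
  qed
qed

locale analytically_irreducible = discrete_val v for v :: "'a::field \<Rightarrow> int" +
  fixes R m :: "'a set"
  assumes subring: "subring R"
    and quot_field: "quotient_field_is_K R"
    and local: "local_ring R m"
    and int_closure: "\<forall>a. integral_over R a \<longleftrightarrow> a \<in> val_ring v"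
    and finite_closure: "\<exists>F. finite F \<and> F \<subseteq> val_ring v \<and> val_ring v = gen_by R F"
    and res_rat: "residually_rational R v"
begin

lemma R_zero: "0 \<in> R" and R_one: "1 \<in> R"
  and R_add: "a \<in> R \<Longrightarrow> b \<in> R \<Longrightarrow> a + b \<in> R"
  and R_mult: "a \<in> R \<Longrightarrow> b \<in> R \<Longrightarrow> a * b \<in> R"
  and R_uminus: "a \<in> R \<Longrightarrow> - a \<in> R"
  using subring unfolding subring_def by auto

lemma R_diff: "a \<in> R \<Longrightarrow> b \<in> R \<Longrightarrow> a - b \<in> R"
  using R_add[of a "-b"] R_uminus[of b] by simp

lemma R_sum: "(\<And>i. i \<in> I \<Longrightarrow> f i \<in> R) \<Longrightarrow> sum f I \<in> R"
  by (induction I rule: infinite_finite_induct) (auto simp: R_zero R_add)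

lemma R_power: "a \<in> R \<Longrightarrow> a ^ n \<in> R"
  by (induction n) (auto simp: R_one R_mult)

lemma R_subset_val_ring: "a \<in> R \<Longrightarrow> a \<in> val_ring v"
proof -
  assume a: "a \<in> R"
  have "integral_over R a"
    unfolding integral_over_def
  proof (intro exI[of _ "[:-a, 1:]"] conjI allI)
    fix i show "coeff [:-a, 1:] i \<in> R"
      using a R_uminus R_zero R_one by (cases i) (auto simp: coeff_pCons split: nat.splits)
  qed auto
  thus ?thesis using int_closure by blast
qed

lemma val_nonneg: "a \<in> R \<Longrightarrow> a \<noteq> 0 \<Longrightarrow> 0 \<le> v a"
  using R_subset_val_ring unfolding val_ring_def by auto

lemma submod_R: "submod R R"
  unfolding submod_def using R_zero R_add R_mult by auto

lemma submod_diff: "submod R M \<Longrightarrow> a \<in> M \<Longrightarrow> b \<in> M \<Longrightarrow> a - b \<in> M"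
  using submodD(2)[of R M a "-b"] submodD(3)[of R M "-1" b] R_one R_uminus by auto

lemma submod_val_ge: "submod R (val_ge v T)"
  unfolding submod_def
proof (intro conjI ballI)
  show "0 \<in> val_ge v T" unfolding val_ge_def by simp
next
  fix a b assume "a \<in> val_ge v T" "b \<in> val_ge v T"
  thus "a + b \<in> val_ge v T"
    using val_add_ge_min[of a b] unfolding val_ge_def by (cases "a = 0 \<or> b = 0 \<or> a + b = 0") auto
next
  fix r a assume r: "r \<in> R" and a: "a \<in> val_ge v T"
  show "r * a \<in> val_ge v T"
  proof (cases "r = 0 \<or> a = 0")
    case False
    thus ?thesis using a val_nonneg[OF r] val_mult[of r a] unfolding val_ge_def by auto
  qed (auto simp: val_ge_def)
qed

lemma submod_smul_set: "submod R (smul_set x R)"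
  unfolding submod_def smul_set_def
proof (intro conjI ballI)
  show "0 \<in> {x * a |a. a \<in> R}" using R_zero by force
next
  fix a b assume "a \<in> {x * a |a. a \<in> R}" "b \<in> {x * a |a. a \<in> R}"
  then obtain r1 r2 where "a = x * r1" "b = x * r2" "r1 \<in> R" "r2 \<in> R" by blast
  hence "a + b = x * (r1 + r2)" "r1 + r2 \<in> R" using R_add by (auto simp: algebra_simps)
  thus "a + b \<in> {x * a |a. a \<in> R}" by blast
next
  fix r a assume "r \<in> R" "a \<in> {x * a |a. a \<in> R}"
  then obtain r1 where "a = x * r1" "r1 \<in> R" "r \<in> R" by blast
  hence "r * a = x * (r * r1)" "r * r1 \<in> R" using R_mult by (auto simp: algebra_simps)
  thus "r * a \<in> {x * a |a. a \<in> R}" by blast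
qed

lemma colon_iff: "a \<in> colon A B \<longleftrightarrow> (\<forall>b\<in>B. a * b \<in> A)"
  unfolding colon_def by simp

lemma submod_colon:
  assumes M: "submod R M"
  shows "submod R (colon M N)"
  unfolding submod_def
proof (intro conjI ballI)
  show "0 \<in> colon M N" using submodD(1)[OF M] unfolding colon_iff by simp
next
  fix a b assume "a \<in> colon M N" "b \<in> colon M N"
  thus "a + b \<in> colon M N" using submodD(2)[OF M] unfolding colon_iff by (simp add: distrib_right)
next
  fix r a assume "r \<in> R" "a \<in> colon M N"
  thus "r * a \<in> colon M N" using submodD(3)[OF M] unfolding colon_iff by (simp add: mult.assoc)
qed

text \<open>Clearing the denominators of finitely many generators of the integral closure.\<close>

lemma ex_common_denominator: "\<exists>d\<in>R. d \<noteq> 0 \<and> (\<forall>w\<in>val_ring v. d * w \<in> R)"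
proof -
  obtain F where F: "finite F" "val_ring v = gen_by R F"
    using finite_closure by blast
  have "\<exists>d\<in>R. d \<noteq> 0 \<and> (\<forall>f\<in>G. d * f \<in> R)" if "finite G" for G :: "'a set"
    using that
  proof (induction G rule: finite_induct)
    case empty thus ?case using R_one by (intro bexI[of _ 1]) auto
  next
    case (insert f G)
    then obtain d where d: "d \<in> R" "d \<noteq> 0" "\<forall>g\<in>G. d * g \<in> R" by blast
    obtain b d' where bd: "b \<in> R" "d' \<in> R" "d' \<noteq> 0" "f = b / d'"
      using quot_field unfolding quotient_field_is_K_def by blast
    have "(d * d') * g \<in> R" if "g \<in> insert f G" for g
    proof (cases "g = f")
      case True thus ?thesis using bd d R_mult by simp
    next
      case False
      hence "d * g \<in> R" using that d by simp
      hence "d' * (d * g) \<in> R" using bd R_mult by simp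
      thus ?thesis by (simp add: ac_simps)
    qed
    moreover have "d * d' \<in> R" "d * d' \<noteq> 0" using d bd R_mult by auto
    ultimately show ?case by blast
  qed
  then obtain d where d: "d \<in> R" "d \<noteq> 0" "\<forall>f\<in>F. d * f \<in> R" using F by blast
  have "d * w \<in> R" if "w \<in> val_ring v" for w
  proof -
    have "w \<in> gen_by R F" using that F(2) by simp
    then obtain g where g: "w = (\<Sum>f\<in>F. g f * f)" "\<forall>f\<in>F. g f \<in> R"
      unfolding gen_by_def by blast
    have "d * w = (\<Sum>f\<in>F. g f * (d * f))" unfolding g by (simp add: sum_distrib_left ac_simps)
    also have "\<dots> \<in> R" by (intro R_sum) (simp add: g(2) d(3) R_mult)
    finally show ?thesis .
  qed
  thus ?thesis using d by blast
qed

lemma ex_val_ge_subset: "\<exists>T\<ge>0. val_ge v T \<subseteq> R"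
proof -
  obtain d where d: "d \<in> R" "d \<noteq> 0" "\<forall>w\<in>val_ring v. d * w \<in> R"
    using ex_common_denominator by blast
  have "z \<in> R" if "z \<in> val_ge v (v d)" for z
  proof (cases "z = 0")
    case True thus ?thesis using R_zero by simp
  next
    case False
    hence "z / d \<in> val_ring v" using that d val_divide unfolding val_ge_def val_ring_def by auto
    hence "d * (z / d) \<in> R" using d by blast
    thus ?thesis using d by simp
  qed
  thus ?thesis using val_nonneg d by (intro exI[of _ "v d"]) auto
qed

text \<open>Successive approximation: residual rationality lets one cancel the leading term of an
element of B by an element of A, raising the value until it lands in val_ge v T.\<close>

lemma subset_if_valset_subset:
  assumes A: "submod R A" and B: "submod R B" and AB: "A \<subseteq> B" and TA: "val_ge v T \<subseteq> A"
    and vals: "valset v B \<subseteq> valset v A"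
  shows "B \<subseteq> A"
proof
  fix b assume "b \<in> B"
  thus "b \<in> A"
  proof (induction "nat (T - v b)" arbitrary: b rule: less_induct)
    case less
    show ?case
    proof (cases "b = 0 \<or> T \<le> v b")
      case True thus ?thesis using TA unfolding val_ge_def by auto
    next
      case False
      hence b0: "b \<noteq> 0" and bT: "v b < T" by auto
      have "v b \<in> valset v A" using vals less.prems b0 valset_iff by blast
      then obtain a where a: "a \<in> A" "a \<noteq> 0" "v a = v b" unfolding valset_iff by blast
      have "v (b / a) = 0" using val_divide[OF b0 a(2)] a by simp
      hence "b / a \<in> val_ring v" unfolding val_ring_def by simp
      then obtain u where u: "u \<in> R" "b / a = u \<or> 0 < v (b / a - u)"
        using res_rat unfolding residually_rational_def by blast
      have ua: "u * a \<in> A" using submodD(3)[OF A u(1) a(1)] .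
      define b' where "b' = b - u * a"
      have b'B: "b' \<in> B" unfolding b'_def using submod_diff[OF B less.prems] ua AB by auto
      have b'_eq: "b' = a * (b / a - u)" unfolding b'_def using a(2) by (simp add: algebra_simps)
      show ?thesis
      proof (cases "b' = 0")
        case True thus ?thesis using ua unfolding b'_def by simp
      next
        case False
        hence "b / a - u \<noteq> 0" using b'_eq by auto
        moreover from this have "0 < v (b / a - u)" using u(2) by auto
        ultimately have "v b' > v b" using val_mult[OF a(2)] b'_eq a(3) by simp
        hence "b' \<in> A" using less.hyps b'B bT by simp
        thus ?thesis using ua submodD(2)[OF A] unfolding b'_def by force
      qed
    qed
  qed
qed

text \<open>Residual rationality gives u \<in> R with w = 1 - u z of positive value; then 1/(1 - w) is a
polynomial in w plus a remainder in val_ge v T \<subseteq> R (truncated geometric series).\<close>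

lemma unit_if_val_zero:
  assumes z: "z \<in> R" "z \<noteq> 0" "v z = 0"
  shows "\<exists>w\<in>R. z * w = 1"
proof -
  obtain T where T: "T \<ge> 0" "val_ge v T \<subseteq> R" using ex_val_ge_subset by blast
  have "v (inverse z) = 0" using val_inverse z by simp
  hence "inverse z \<in> val_ring v" unfolding val_ring_def by simp
  then obtain u where u: "u \<in> R" "inverse z = u \<or> 0 < v (inverse z - u)"
    using res_rat unfolding residually_rational_def by blast
  show ?thesis
  proof (cases "inverse z = u")
    case True thus ?thesis using u z by (intro bexI[of _ u]) auto
  next
    case False
    define w where "w = 1 - u * z"
    have wR: "w \<in> R" unfolding w_def using R_diff R_one R_mult u z by auto
    have w_eq: "w = z * (inverse z - u)" unfolding w_def using z by (simp add: algebra_simps)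
    have w0: "w \<noteq> 0" using w_eq z False by simp
    have vw: "0 < v w" using val_mult[OF z(2)] w_eq u(2) False z by simp
    have "1 + (- w) \<noteq> 0" "v (1 + (- w)) = v 1"
      using val_add_eq_left[of 1 "-w"] val_uminus[OF w0] vw val_one w0 by auto
    hence w1: "1 - w \<noteq> 0" and vw1: "v (1 - w) = 0" using val_one by auto
    define N where "N = nat T"
    have geom: "inverse (1 - w) = (\<Sum>i<N. w^i) + w^N * inverse (1 - w)"
    proof -
      have "1 - w^N = (1 - w) * (\<Sum>i<N. w^i)" by (rule one_diff_power_eq)
      hence "(\<Sum>i<N. w^i) = (1 - w^N) * inverse (1 - w)" using w1 by (simp add: field_simps)
      thus ?thesis by (simp add: algebra_simps)
    qed
    have "T * 1 \<le> T * v w" using vw T(1) by (intro mult_left_mono) auto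
    hence "T \<le> int N * v w" unfolding N_def using T(1) by simp
    hence "w^N * inverse (1 - w) \<in> val_ge v T"
      using val_mult[of "w^N" "inverse (1 - w)"] val_power[OF w0] val_inverse[OF w1] vw1 w0 w1
      unfolding val_ge_def by simp
    hence "inverse (1 - w) \<in> R" using geom T R_add R_sum R_power wR by (metis subsetD)
    moreover have "z * (u * inverse (1 - w)) = 1"
      using w1 unfolding w_def by (simp add: field_simps)
    ultimately show ?thesis using u R_mult by blast
  qed
qed

lemma strict_chain_length_le_card:
  assumes TA: "val_ge v T \<subseteq> A"
    and fin: "finite (valset v B - valset v A)"
    and L: "L 0 = A" "L n = B" "\<forall>i\<le>n. submod R (L i)" "\<forall>i<n. L i \<subset> L (Suc i)"
  shows "n \<le> card (valset v B - valset v A)"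
proof -
  have LB: "L i \<subseteq> B" if "i \<le> n" for i using strict_chain_mono[OF L(4) that order_refl] L(2) by simp
  have AL: "A \<subseteq> L i" if "i \<le> n" for i using strict_chain_mono[OF L(4) le0 that] L(1) by simp
  have "i \<le> card (valset v (L i) - valset v A)" if "i \<le> n" for i
    using that
  proof (induction i)
    case 0 thus ?case by simp
  next
    case (Suc i)
    have sub: "L i \<subset> L (Suc i)" using L(4) Suc.prems by simp
    have "\<not> valset v (L (Suc i)) \<subseteq> valset v (L i)"
    proof
      assume "valset v (L (Suc i)) \<subseteq> valset v (L i)"
      moreover have "val_ge v T \<subseteq> L i" using TA AL[of i] Suc.prems by auto
      ultimately have "L (Suc i) \<subseteq> L i"
        using subset_if_valset_subset L(3) Suc.prems sub by (meson Suc_leD psubset_imp_subset)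
      thus False using sub by auto
    qed
    then obtain s where s: "s \<in> valset v (L (Suc i))" "s \<notin> valset v (L i)" by blast
    have "s \<notin> valset v A" using s valset_mono[OF AL[of i]] Suc.prems by auto
    hence ps: "valset v (L i) - valset v A \<subset> valset v (L (Suc i)) - valset v A"
      using s valset_mono[of "L i" "L (Suc i)"] sub by auto
    have "finite (valset v (L (Suc i)) - valset v A)"
      using fin valset_mono[OF LB[OF Suc.prems], of v] by (meson Diff_mono order_refl rev_finite_subset)
    hence "card (valset v (L i) - valset v A) < card (valset v (L (Suc i)) - valset v A)"
      using ps psubset_card_mono by blast
    thus ?case using Suc by simp
  qed
  from this[of n] show ?thesis using L(2) by simp
qed

text \<open>Each step of the chain adjoins the elements of B of value at least the largest missing
value; this removes exactly that value from the difference.\<close>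

lemma ex_strict_chain_card:
  assumes B: "submod R B"
  shows "submod R A \<Longrightarrow> A \<subseteq> B \<Longrightarrow> val_ge v T \<subseteq> A \<Longrightarrow> finite (valset v B - valset v A)
    \<Longrightarrow> card (valset v B - valset v A) = N
    \<Longrightarrow> \<exists>L. L 0 = A \<and> L N = B \<and> (\<forall>i\<le>N. submod R (L i)) \<and> (\<forall>i<N. L i \<subset> L (Suc i))"
proof (induction N arbitrary: A)
  case 0
  hence "valset v B \<subseteq> valset v A" by auto
  hence "B \<subseteq> A" using subset_if_valset_subset[OF 0(1) B 0(2) 0(3)] by blast
  hence "A = B" using 0 by auto
  thus ?case using 0 by (intro exI[of _ "\<lambda>_. A"]) auto
next
  case (Suc N)
  define D where "D = valset v B - valset v A"
  have fD: "finite D" using Suc.prems unfolding D_def by simp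
  have Dne: "D \<noteq> {}" using Suc.prems(5) unfolding D_def by (metis card.empty nat.distinct(1))
  define s where "s = Max D"
  have sD: "s \<in> D" and smax: "\<And>t. t \<in> D \<Longrightarrow> t \<le> s" using fD Dne unfolding s_def by simp_all
  define A' where "A' = sum_set A (B \<inter> val_ge v s)"
  have A'sub: "submod R A'" unfolding A'_def
    by (intro submod_sum_set submod_Int Suc.prems B submod_val_ge)
  have AA': "A \<subseteq> A'"
  proof
    fix a assume "a \<in> A"
    moreover have "0 \<in> B \<inter> val_ge v s" using submodD(1)[OF B] unfolding val_ge_def by simp
    ultimately show "a \<in> A'" unfolding A'_def sum_set_def by force
  qed
  have A'B: "A' \<subseteq> B" unfolding A'_def sum_set_def using Suc.prems(2) submodD(2)[OF B] by auto
  have vA': "valset v A' \<subseteq> valset v A \<union> {t \<in> valset v B. s \<le> t}"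
  proof
    fix n assume "n \<in> valset v A'"
    then obtain z where z: "z \<in> A'" "z \<noteq> 0" "v z = n" using valset_iff by metis
    then obtain a d where ad: "z = a + d" "a \<in> A" "d \<in> B" "d \<in> val_ge v s"
      unfolding A'_def sum_set_def by blast
    have nB: "n \<in> valset v B" using z A'B valset_iff by blast
    show "n \<in> valset v A \<union> {t \<in> valset v B. s \<le> t}"
    proof (cases "a = 0 \<or> d = 0")
      case True thus ?thesis using ad z nB valset_iff unfolding val_ge_def by force
    next
      case False
      hence a0: "a \<noteq> 0" and d0: "d \<noteq> 0" by auto
      hence vd: "s \<le> v d" using ad unfolding val_ge_def by auto
      show ?thesis
      proof (cases "s \<le> v a")
        case True
        hence "s \<le> v z" using val_add_ge_min[OF a0 d0] ad z vd by auto
        thus ?thesis using nB z by auto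
      next
        case False
        hence "v z = v a" using val_add_eq_left[OF a0 d0] vd ad by auto
        thus ?thesis using ad z a0 valset_iff by force
      qed
    qed
  qed
  have sA': "s \<in> valset v A'"
  proof -
    obtain b where b: "b \<in> B" "b \<noteq> 0" "v b = s" using sD valset_iff unfolding D_def by blast
    have "b \<in> A'" unfolding A'_def sum_set_def using b submodD(1)[OF Suc.prems(1)]
      unfolding val_ge_def by force
    thus ?thesis using b valset_iff by blast
  qed
  have D': "valset v B - valset v A' = D - {s}"
  proof
    show "valset v B - valset v A' \<subseteq> D - {s}"
      using valset_mono[OF AA'] sA' unfolding D_def by auto
    show "D - {s} \<subseteq> valset v B - valset v A'"
    proof
      fix t assume t: "t \<in> D - {s}"
      hence "t < s" using smax by force
      thus "t \<in> valset v B - valset v A'" using t vA' unfolding D_def by auto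
    qed
  qed
  have "card (valset v B - valset v A') = N" using D' Suc.prems sD fD unfolding D_def by simp
  moreover have "finite (valset v B - valset v A')" using D' fD by simp
  ultimately obtain L where L: "L 0 = A'" "L N = B" "\<forall>i\<le>N. submod R (L i)" "\<forall>i<N. L i \<subset> L (Suc i)"
    using Suc.IH[OF A'sub A'B] Suc.prems(3) AA' by blast
  have AA'_ne: "A \<noteq> A'" using sA' sD unfolding D_def by auto
  define L' where "L' = (\<lambda>i. if i = 0 then A else L (i - 1))"
  have "L' 0 = A" "L' (Suc N) = B" unfolding L'_def using L by auto
  moreover have "\<forall>i\<le>Suc N. submod R (L' i)" unfolding L'_def using L(3) Suc.prems(1) by auto
  moreover have "\<forall>i<Suc N. L' i \<subset> L' (Suc i)"
  proof (intro allI impI)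
    fix i assume i: "i < Suc N"
    show "L' i \<subset> L' (Suc i)"
    proof (cases i)
      case 0 thus ?thesis unfolding L'_def using L(1) AA' AA'_ne by auto
    next
      case (Suc j) thus ?thesis unfolding L'_def using L(4) i by auto
    qed
  qed
  ultimately show ?case by blast
qed

lemma mod_length_eq_card_valset_diff:
  assumes A: "submod R A" and B: "submod R B" and AB: "A \<subseteq> B" and TA: "val_ge v T \<subseteq> A"
    and fin: "finite (valset v B - valset v A)"
  shows "mod_length R B A = card (valset v B - valset v A)"
  unfolding mod_length_def
proof (rule cSup_eq_maximum)
  show "card (valset v B - valset v A) \<in> {n. \<exists>L. L 0 = A \<and> L n = B \<and> (\<forall>i\<le>n. submod R (L i))
          \<and> (\<forall>i<n. L i \<subset> L (Suc i))}"
    using ex_strict_chain_card[OF B A AB TA fin] by blast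
next
  fix n assume "n \<in> {n. \<exists>L. L 0 = A \<and> L n = B \<and> (\<forall>i\<le>n. submod R (L i))
          \<and> (\<forall>i<n. L i \<subset> L (Suc i))}"
  then obtain L where "L 0 = A" "L n = B" "\<forall>i\<le>n. submod R (L i)" "\<forall>i<n. L i \<subset> L (Suc i)"
    by blast
  thus "n \<le> card (valset v B - valset v A)" using strict_chain_length_le_card[OF TA fin] by blast
qed

definition valS :: "int set" where "valS = valset v R"
definition conductor :: int where "conductor = (LEAST c. c \<in> valS \<and> (\<forall>n::nat. c + int n \<in> valS))"
definition mult_e :: int where "mult_e = (LEAST e. e \<in> valS \<and> 0 < e)"

lemma valS_iff: "n \<in> valS \<longleftrightarrow> (\<exists>a\<in>R. a \<noteq> 0 \<and> v a = n)"
  unfolding valS_def valset_iff ..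

lemma valS_nonneg: "s \<in> valS \<Longrightarrow> 0 \<le> s"
  using val_nonneg valS_iff by auto

lemma zero_in_valS: "0 \<in> valS"
  using valS_iff R_one val_one by force

lemma valS_add:
  assumes "s \<in> valS" "t \<in> valS"
  shows "s + t \<in> valS"
proof -
  obtain a b where "a \<in> R" "a \<noteq> 0" "v a = s" "b \<in> R" "b \<noteq> 0" "v b = t"
    using assms valS_iff by auto
  hence "a * b \<in> R" "a * b \<noteq> 0" "v (a * b) = s + t" using R_mult val_mult by auto
  thus ?thesis unfolding valS_iff by blast
qed

lemma valS_add_mult:
  assumes "s \<in> valS" "t \<in> valS"
  shows "s + int k * t \<in> valS"
proof (induction k)
  case (Suc k)
  hence "(s + int k * t) + t \<in> valS" using assms(2) by (rule valS_add)
  thus ?case by (simp add: algebra_simps)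
qed (simp add: assms(1))

lemma
  shows conductor_in_valS: "conductor \<in> valS"
    and conductor_add_in_valS: "\<And>n::nat. conductor + int n \<in> valS"
    and conductor_least: "\<And>c. c \<in> valS \<Longrightarrow> (\<forall>n::nat. c + int n \<in> valS) \<Longrightarrow> conductor \<le> c"
proof -
  obtain T where T: "T \<ge> 0" "val_ge v T \<subseteq> R" using ex_val_ge_subset by blast
  have "T + int n \<in> valS" for n :: nat
  proof -
    obtain a where "a \<noteq> 0" "v a = T + int n" using ex_val_eq by blast
    thus ?thesis using T valS_iff unfolding val_ge_def by force
  qed
  hence "T \<in> valS \<and> (\<forall>n::nat. T + int n \<in> valS)" using add_0_right[of T] of_nat_0 by metis
  from Least_int_nonneg[of "\<lambda>c. c \<in> valS \<and> (\<forall>n::nat. c + int n \<in> valS)", OF this] valS_nonneg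
  show "conductor \<in> valS" "\<And>n::nat. conductor + int n \<in> valS"
    "\<And>c. c \<in> valS \<Longrightarrow> (\<forall>n::nat. c + int n \<in> valS) \<Longrightarrow> conductor \<le> c"
    unfolding conductor_def by blast+
qed

lemma conductor_nonneg: "0 \<le> conductor"
  using conductor_in_valS valS_nonneg by blast

lemma in_valS_if_ge_conductor: "conductor \<le> n \<Longrightarrow> n \<in> valS"
  using conductor_add_in_valS[of "nat (n - conductor)"] by simp

lemma infinite_valS: "infinite valS"
proof
  assume "finite valS"
  moreover have "max (Max valS) conductor + 1 \<in> valS" using in_valS_if_ge_conductor by simp
  ultimately have "max (Max valS) conductor + 1 \<le> Max valS" by (rule Max_ge)
  thus False by simp
qed

lemma val_ge_conductor_subset: "val_ge v conductor \<subseteq> R"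
proof -
  obtain T where T: "T \<ge> 0" "val_ge v T \<subseteq> R" using ex_val_ge_subset by blast
  have "val_ge v conductor \<subseteq> R \<inter> val_ge v conductor"
  proof (rule subset_if_valset_subset)
    show "submod R (R \<inter> val_ge v conductor)" by (intro submod_Int submod_R submod_val_ge)
    show "submod R (val_ge v conductor)" by (rule submod_val_ge)
    show "R \<inter> val_ge v conductor \<subseteq> val_ge v conductor" by auto
    have "val_ge v (max T conductor) \<subseteq> val_ge v T" "val_ge v (max T conductor) \<subseteq> val_ge v conductor"
      by (rule val_ge_antimono, simp)+
    thus "val_ge v (max T conductor) \<subseteq> R \<inter> val_ge v conductor" using T by blast
    show "valset v (val_ge v conductor) \<subseteq> valset v (R \<inter> val_ge v conductor)"
    proof
      fix n assume "n \<in> valset v (val_ge v conductor)"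
      hence "conductor \<le> n" using valset_val_ge by blast
      then obtain a where "a \<in> R" "a \<noteq> 0" "v a = n" using in_valS_if_ge_conductor valS_iff by blast
      thus "n \<in> valset v (R \<inter> val_ge v conductor)"
        using \<open>conductor \<le> n\<close> unfolding valset_iff val_ge_def by auto
    qed
  qed
  thus ?thesis by auto
qed

lemma colon_val_ring_eq: "colon R (val_ring v) = val_ge v conductor"
proof
  show "val_ge v conductor \<subseteq> colon R (val_ring v)"
  proof
    fix z assume z: "z \<in> val_ge v conductor"
    have "z * w \<in> val_ge v conductor" if "w \<in> val_ring v" for w
      using z that val_mult[of z w] unfolding val_ge_def val_ring_def
      by (cases "z = 0 \<or> w = 0") auto
    thus "z \<in> colon R (val_ring v)" using val_ge_conductor_subset unfolding colon_iff by blast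
  qed
next
  show "colon R (val_ring v) \<subseteq> val_ge v conductor"
  proof
    fix z assume z: "z \<in> colon R (val_ring v)"
    show "z \<in> val_ge v conductor"
    proof (cases "z = 0")
      case True thus ?thesis unfolding val_ge_def by simp
    next
      case False
      have "v z + int n \<in> valS" for n :: nat
      proof -
        obtain a where a: "a \<noteq> 0" "v a = int n" using ex_val_eq by blast
        hence "z * a \<in> R" using z unfolding colon_iff val_ring_def by simp
        moreover have "z * a \<noteq> 0" "v (z * a) = v z + int n" using a False val_mult by auto
        ultimately show ?thesis unfolding valS_iff by blast
      qed
      hence "v z \<in> valS \<and> (\<forall>n::nat. v z + int n \<in> valS)" using add_0_right[of "v z"] of_nat_0 by metis
      hence "conductor \<le> v z" using conductor_least by blast
      thus ?thesis unfolding val_ge_def by simp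
    qed
  qed
qed

lemma
  shows mult_e_in_valS: "mult_e \<in> valS"
    and mult_e_pos: "0 < mult_e"
    and mult_e_le: "\<And>s. s \<in> valS \<Longrightarrow> 0 < s \<Longrightarrow> mult_e \<le> s"
proof -
  have "conductor + 1 \<in> valS \<and> 0 < conductor + 1"
    using conductor_add_in_valS[of 1] conductor_nonneg by simp
  from Least_int_nonneg[of "\<lambda>e. e \<in> valS \<and> 0 < e", OF this]
  show "mult_e \<in> valS" "0 < mult_e" "\<And>s. s \<in> valS \<Longrightarrow> 0 < s \<Longrightarrow> mult_e \<le> s"
    unfolding mult_e_def by auto
qed

lemma
  shows m_subset_R: "m \<subseteq> R" and submod_m: "submod R m" and m_ne_R: "m \<noteq> R"
    and unit_if_notin_m: "\<And>a. a \<in> R \<Longrightarrow> a \<notin> m \<Longrightarrow> \<exists>b\<in>R. a * b = 1"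
  using local unfolding local_ring_def ideal_of_def by auto

lemma m_eq_pos_val: "m = {z \<in> R. z = 0 \<or> 0 < v z}"
proof
  show "m \<subseteq> {z \<in> R. z = 0 \<or> 0 < v z}"
  proof
    fix z assume zm: "z \<in> m"
    hence zR: "z \<in> R" using m_subset_R by auto
    have "0 < v z" if z0: "z \<noteq> 0"
    proof (rule ccontr)
      assume "\<not> 0 < v z"
      hence "v z = 0" using val_nonneg[OF zR z0] by simp
      then obtain w where w: "w \<in> R" "z * w = 1" using unit_if_val_zero zR z0 by blast
      have "w * z \<in> m" using submodD(3)[OF submod_m w(1) zm] .
      hence "1 \<in> m" using w by (simp add: mult.commute)
      hence "R \<subseteq> m" using submodD(3)[OF submod_m] by force
      thus False using m_subset_R m_ne_R by auto
    qed
    thus "z \<in> {z \<in> R. z = 0 \<or> 0 < v z}" using zR by auto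
  qed
next
  show "{z \<in> R. z = 0 \<or> 0 < v z} \<subseteq> m"
  proof
    fix z assume z: "z \<in> {z \<in> R. z = 0 \<or> 0 < v z}"
    show "z \<in> m"
    proof (rule ccontr)
      assume zm: "z \<notin> m"
      hence z0: "z \<noteq> 0" using submodD(1)[OF submod_m] by auto
      obtain b where b: "b \<in> R" "z * b = 1" using unit_if_notin_m z zm by blast
      hence "b \<noteq> 0" by auto
      hence "v z + v b = 0" using val_mult[OF z0 \<open>b \<noteq> 0\<close>] b(2) val_one by simp
      thus False using val_nonneg[OF b(1) \<open>b \<noteq> 0\<close>] z z0 by auto
    qed
  qed
qed

lemma val_m:
  assumes "z \<in> m" "z \<noteq> 0"
  shows "v z \<in> valS" and "mult_e \<le> v z"
proof -
  have "z \<in> R" "0 < v z" using assms m_eq_pos_val by auto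
  thus "v z \<in> valS" using assms(2) valS_iff by blast
  thus "mult_e \<le> v z" using mult_e_le \<open>0 < v z\<close> by blast
qed

lemma in_m_if_pos_val: "z \<in> R \<Longrightarrow> 0 < v z \<Longrightarrow> z \<in> m"
  using m_eq_pos_val by simp

lemma ex_m_val_mult_e: "\<exists>x. x \<in> m \<and> x \<noteq> 0 \<and> v x = mult_e"
proof -
  obtain a where "a \<in> R" "a \<noteq> 0" "v a = mult_e" using mult_e_in_valS valS_iff by blast
  thus ?thesis using in_m_if_pos_val mult_e_pos by (intro exI[of _ a]) auto
qed

text \<open>dualS is v(R:m); shifted_dualS = e + v(R:m) is v(xR:m) (lemma valset_colon_smul).\<close>

definition dualS :: "int set" where "dualS = valset v (colon R m)"
definition shifted_dualS :: "int set" where "shifted_dualS = (\<lambda>n. mult_e + n) ` dualS"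
definition apery :: "int set" where "apery = {s \<in> valS. s - mult_e \<notin> valS}"

lemma R_subset_colon_m: "R \<subseteq> colon R m"
  unfolding colon_def using m_subset_R R_mult by blast

lemma dualS_iff: "n \<in> dualS \<longleftrightarrow> (\<exists>a\<in>colon R m. a \<noteq> 0 \<and> v a = n)"
  unfolding dualS_def valset_iff ..

lemma shifted_dualS_subset: "n \<in> dualS \<Longrightarrow> mult_e + n \<in> valS"
proof -
  assume "n \<in> dualS"
  then obtain a where a: "a \<in> colon R m" "a \<noteq> 0" "v a = n" using dualS_iff by blast
  obtain x where x: "x \<in> m" "x \<noteq> 0" "v x = mult_e" using ex_m_val_mult_e by blast
  have "a * x \<in> R" using a x colon_iff by blast
  moreover have "a * x \<noteq> 0" "v (a * x) = mult_e + n" using a x val_mult by auto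
  ultimately show ?thesis unfolding valS_iff by blast
qed

lemma dualS_lower: "n \<in> dualS \<Longrightarrow> - mult_e \<le> n"
  using shifted_dualS_subset valS_nonneg by fastforce

lemma dualS_upper: "conductor - mult_e \<le> n \<Longrightarrow> n \<in> dualS"
proof -
  assume n: "conductor - mult_e \<le> n"
  obtain a where a: "a \<noteq> 0" "v a = n" using ex_val_eq by blast
  have "a * b \<in> R" if "b \<in> m" for b
  proof (cases "b = 0")
    case True thus ?thesis using R_zero by simp
  next
    case False
    hence "a * b \<in> val_ge v conductor"
      using val_m(2)[OF that] val_mult[OF a(1) False] a n unfolding val_ge_def by simp
    thus ?thesis using val_ge_conductor_subset by blast
  qed
  hence "a \<in> colon R m" unfolding colon_iff by blast
  thus ?thesis unfolding dualS_iff using a by blast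
qed

lemma valS_subset_dualS: "valS \<subseteq> dualS"
  unfolding valS_def dualS_def using R_subset_colon_m by (rule valset_mono)

lemma finite_dualS_diff: "finite (dualS - valS)"
proof (rule finite_subset)
  show "dualS - valS \<subseteq> {- mult_e..<conductor}"
  proof
    fix n assume "n \<in> dualS - valS"
    hence "- mult_e \<le> n" "\<not> conductor \<le> n" using dualS_lower in_valS_if_ge_conductor by blast+
    thus "n \<in> {- mult_e..<conductor}" by simp
  qed
qed simp

lemma mod_length_colon_m: "mod_length R (colon R m) R = card (dualS - valS)"
  using mod_length_eq_card_valset_diff[OF submod_R submod_colon[OF submod_R] R_subset_colon_m
      val_ge_conductor_subset] finite_dualS_diff
  unfolding dualS_def valS_def by simp

text \<open>The residues modulo e are in bijection with the Apery set: each residue class meets it in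
its least element of valS, which exists because the class contains large integers.\<close>

lemma apery_finite_card: "finite apery" "card apery = nat mult_e"
proof -
  have inj: "inj_on (\<lambda>s. s mod mult_e) apery"
  proof (rule inj_onI)
    fix s1 s2 assume s1: "s1 \<in> apery" and s2: "s2 \<in> apery" and eq: "s1 mod mult_e = s2 mod mult_e"
    have *: False if a: "a \<in> apery" "b \<in> apery" "a mod mult_e = b mod mult_e" "a < b" for a b
    proof -
      have "mult_e dvd (b - a)" by (metis a(3) mod_eq_dvd_iff dvd_minus_iff minus_diff_eq)
      then obtain q where q: "b - a = mult_e * q" by blast
      have "q \<ge> 1" using q a(4) mult_e_pos by (smt (verit) mult_le_0_iff)
      have "b - mult_e = a + int (nat (q - 1)) * mult_e" using q \<open>q \<ge> 1\<close> by (simp add: algebra_simps)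
      moreover have "a + int (nat (q - 1)) * mult_e \<in> valS"
        using valS_add_mult a(1) mult_e_in_valS unfolding apery_def by blast
      ultimately show False using a(2) unfolding apery_def by simp
    qed
    show "s1 = s2" using *[OF s1 s2 eq] *[OF s2 s1 eq[symmetric]] by (metis not_less_iff_gr_or_eq)
  qed
  have img: "(\<lambda>s. s mod mult_e) ` apery = {0..<mult_e}"
  proof
    show "(\<lambda>s. s mod mult_e) ` apery \<subseteq> {0..<mult_e}" using mult_e_pos by auto
  next
    show "{0..<mult_e} \<subseteq> (\<lambda>s. s mod mult_e) ` apery"
    proof
      fix j assume j: "j \<in> {0..<mult_e}"
      define w where "w = conductor + (j - conductor) mod mult_e"
      have "w \<in> valS" unfolding w_def using in_valS_if_ge_conductor mult_e_pos by simp
      moreover have "w mod mult_e = j" unfolding w_def using j by (simp add: mod_add_right_eq)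
      ultimately have "w \<in> valS \<and> w mod mult_e = j" by simp
      from Least_int_nonneg[of "\<lambda>s. s \<in> valS \<and> s mod mult_e = j", OF this] valS_nonneg
      obtain s0 where s0: "s0 \<in> valS" "s0 mod mult_e = j"
        "\<And>s. s \<in> valS \<Longrightarrow> s mod mult_e = j \<Longrightarrow> s0 \<le> s"
        by blast
      have "s0 - mult_e \<notin> valS"
      proof
        assume "s0 - mult_e \<in> valS"
        moreover have "(s0 - mult_e) mod mult_e = j" using s0(2) by (simp add: mod_diff_right_eq[symmetric])
        ultimately have "s0 \<le> s0 - mult_e" using s0(3) by blast
        thus False using mult_e_pos by simp
      qed
      thus "j \<in> (\<lambda>s. s mod mult_e) ` apery" using s0 unfolding apery_def by force
    qed
  qed
  show "finite apery" using finite_imageD[of "\<lambda>s. s mod mult_e" apery] inj img by simp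
  show "card apery = nat mult_e" using card_image[OF inj] img by simp
qed

lemma apery_eq_Un: "apery = (valS - shifted_dualS) \<union> (\<lambda>n. mult_e + n) ` (dualS - valS)"
proof
  show "apery \<subseteq> (valS - shifted_dualS) \<union> (\<lambda>n. mult_e + n) ` (dualS - valS)"
    unfolding apery_def shifted_dualS_def by force
  show "(valS - shifted_dualS) \<union> (\<lambda>n. mult_e + n) ` (dualS - valS) \<subseteq> apery"
    using shifted_dualS_subset valS_subset_dualS unfolding apery_def shifted_dualS_def by force
qed

lemma card_valS_diff_shifted: "int (card (valS - shifted_dualS)) = mult_e - int (card (dualS - valS))"
proof -
  have "card apery = card ((valS - shifted_dualS) \<union> (\<lambda>n. mult_e + n) ` (dualS - valS))"
    using apery_eq_Un by simp
  also have "\<dots> = card (valS - shifted_dualS) + card ((\<lambda>n. mult_e + n) ` (dualS - valS))"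
  proof (rule card_Un_disjoint)
    show "finite (valS - shifted_dualS)" using apery_finite_card(1) apery_eq_Un by (metis finite_Un)
    show "finite ((\<lambda>n. mult_e + n) ` (dualS - valS))" using finite_dualS_diff by simp
    show "(valS - shifted_dualS) \<inter> (\<lambda>n. mult_e + n) ` (dualS - valS) = {}"
      unfolding shifted_dualS_def by blast
  qed
  moreover have "card ((\<lambda>n. mult_e + n) ` (dualS - valS)) = card (dualS - valS)"
    by (rule card_image) (simp add: inj_on_def)
  ultimately show ?thesis using apery_finite_card(2) mult_e_pos by simp
qed

lemma valS_diff_shifted_subset:
  "valS - shifted_dualS \<subseteq> {s \<in> valS. s < conductor \<and> s - mult_e \<notin> valS}"
proof
  fix s assume s: "s \<in> valS - shifted_dualS"
  hence "s - mult_e \<notin> dualS" unfolding shifted_dualS_def by force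
  thus "s \<in> {s \<in> valS. s < conductor \<and> s - mult_e \<notin> valS}"
    using s valS_subset_dualS dualS_upper[of "s - mult_e"] by force
qed

text \<open>conductor_plus x is C + xR, and gaps x is the set {y_1, ..., y_(k-1)} of the statement.\<close>

definition conductor_plus :: "'a \<Rightarrow> 'a set" where
  "conductor_plus x = sum_set (val_ge v conductor) (smul_set x R)"

definition gaps :: "'a \<Rightarrow> int set" where
  "gaps x = {s \<in> valS. 0 < s \<and> s \<notin> valset v (conductor_plus x)}"

lemma conductor_plus_iff: "z \<in> conductor_plus x \<longleftrightarrow> (\<exists>d r. z = d + x * r \<and> d \<in> val_ge v conductor \<and> r \<in> R)"
  unfolding conductor_plus_def sum_set_def smul_set_def by blast

lemma val_ge_subset_conductor_plus: "val_ge v conductor \<subseteq> conductor_plus x"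
proof
  fix d assume "d \<in> val_ge v conductor"
  hence "d + x * 0 \<in> conductor_plus x" unfolding conductor_plus_iff using R_zero by blast
  thus "d \<in> conductor_plus x" by simp
qed

lemma conductor_plus_subset_R:
  assumes "x \<in> R"
  shows "conductor_plus x \<subseteq> R"
proof
  fix z assume "z \<in> conductor_plus x"
  then obtain d r where "z = d + x * r" "d \<in> val_ge v conductor" "r \<in> R"
    unfolding conductor_plus_iff by blast
  thus "z \<in> R" using val_ge_conductor_subset R_add R_mult assms by auto
qed

lemma conductor_plus_subset_m:
  assumes "x \<in> m" "0 < conductor"
  shows "conductor_plus x \<subseteq> m"
proof
  fix z assume "z \<in> conductor_plus x"
  then obtain d r where dr: "z = d + x * r" "d \<in> val_ge v conductor" "r \<in> R"
    unfolding conductor_plus_iff by blast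
  have "d \<in> m"
    using dr(2) val_ge_conductor_subset in_m_if_pos_val submodD(1)[OF submod_m] assms(2)
    unfolding val_ge_def by (cases "d = 0") auto
  moreover have "r * x \<in> m" using submodD(3)[OF submod_m dr(3) assms(1)] .
  ultimately show "z \<in> m" using dr(1) submodD(2)[OF submod_m] by (simp add: mult.commute)
qed

lemma valset_conductor_plus_ge: "conductor \<le> n \<Longrightarrow> n \<in> valset v (conductor_plus x)"
  using valset_mono[OF val_ge_subset_conductor_plus] valset_val_ge by blast

lemma gaps_bounds:
  assumes "s \<in> gaps x"
  shows "mult_e \<le> s" and "s < conductor"
proof -
  have s: "s \<in> valS" "0 < s" "s \<notin> valset v (conductor_plus x)" using assms unfolding gaps_def by auto
  thus "mult_e \<le> s" using mult_e_le by blast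
  show "s < conductor" using s(3) valset_conductor_plus_ge by (meson not_less)
qed

lemma finite_gaps: "finite (gaps x)"
  by (rule finite_subset[of _ "{mult_e..<conductor}"]) (use gaps_bounds in fastforce, simp)

lemma card_insert_zero_gaps: "card (insert 0 (gaps x)) = Suc (card (gaps x))"
proof -
  have "0 \<notin> gaps x" unfolding gaps_def by simp
  thus ?thesis using finite_gaps by simp
qed

lemma mod_length_conductor_plus:
  assumes "x \<in> R"
  shows "mod_length R R (conductor_plus x) = card (valS - valset v (conductor_plus x))"
proof -
  have "valS - valset v (conductor_plus x) \<subseteq> insert 0 (gaps x)"
    using valS_nonneg unfolding gaps_def by force
  hence "finite (valS - valset v (conductor_plus x))" using finite_gaps finite_subset by blast
  moreover have "submod R (conductor_plus x)"
    unfolding conductor_plus_def by (intro submod_sum_set submod_val_ge submod_smul_set)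
  ultimately show ?thesis
    using mod_length_eq_card_valset_diff[OF _ submod_R conductor_plus_subset_R[OF assms]
        val_ge_subset_conductor_plus] unfolding valS_def by simp
qed

lemma valS_diff_conductor_plus:
  assumes "x \<in> m"
  shows "valS - valset v (conductor_plus x) = (if 0 < conductor then insert 0 (gaps x) else {})"
proof (cases "0 < conductor")
  case True
  have "0 \<notin> valset v (conductor_plus x)"
    using conductor_plus_subset_m[OF assms True] m_eq_pos_val unfolding valset_iff by force
  thus ?thesis using True zero_in_valS valS_nonneg unfolding gaps_def by force
next
  case False
  thus ?thesis using valS_nonneg valset_conductor_plus_ge by force
qed

lemma apery_below_subset_gaps:
  assumes "v x = mult_e"
  shows "{s \<in> valS. 0 < s \<and> s < conductor \<and> s - mult_e \<notin> valS} \<subseteq> gaps x"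
proof
  fix s assume s: "s \<in> {s \<in> valS. 0 < s \<and> s < conductor \<and> s - mult_e \<notin> valS}"
  have "s \<notin> valset v (conductor_plus x)"
  proof
    assume "s \<in> valset v (conductor_plus x)"
    then obtain z where z: "z \<in> conductor_plus x" "z \<noteq> 0" "v z = s" unfolding valset_iff by blast
    then obtain d r where dr: "z = d + x * r" "d \<in> val_ge v conductor" "r \<in> R"
      unfolding conductor_plus_iff by blast
    show False
    proof (cases "x * r = 0")
      case True
      thus False using z dr s unfolding val_ge_def by auto
    next
      case xr0: False
      hence "x \<noteq> 0" "r \<noteq> 0" by auto
      hence vxr: "v (x * r) = mult_e + v r" and vrS: "v r \<in> valS"
        using assms val_mult valS_iff dr(3) by auto
      have "v z = v (x * r)"
      proof (cases "d = 0")
        case False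
        have "v (x * r) < v d" using dr(2) False s z val_add_ge_min[OF False xr0] dr(1)
          unfolding val_ge_def by force
        thus ?thesis using val_add_eq_left[OF xr0 False] dr(1) by (simp add: add.commute)
      qed (simp add: dr(1))
      thus False using vxr vrS z s by simp
    qed
  qed
  thus "s \<in> gaps x" using s unfolding gaps_def by blast
qed

lemma valset_colon_smul:
  assumes "x \<noteq> 0" "v x = mult_e"
  shows "valset v (colon (smul_set x R) m) = shifted_dualS"
proof
  show "valset v (colon (smul_set x R) m) \<subseteq> shifted_dualS"
  proof
    fix n assume "n \<in> valset v (colon (smul_set x R) m)"
    then obtain a where a: "a \<in> colon (smul_set x R) m" "a \<noteq> 0" "v a = n"
      unfolding valset_iff by blast
    have "a / x \<in> colon R m" unfolding colon_iff
    proof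
      fix b assume "b \<in> m"
      then obtain r where "a * b = x * r" "r \<in> R" using a(1) unfolding colon_iff smul_set_def by blast
      thus "a / x * b \<in> R" using assms by (simp add: field_simps)
    qed
    moreover have "a / x \<noteq> 0" "v (a / x) = n - mult_e" using a assms val_divide by auto
    ultimately have "n - mult_e \<in> dualS" unfolding dualS_iff by blast
    thus "n \<in> shifted_dualS" unfolding shifted_dualS_def by (rule image_eqI[rotated]) simp
  qed
  show "shifted_dualS \<subseteq> valset v (colon (smul_set x R) m)"
  proof
    fix n assume "n \<in> shifted_dualS"
    then obtain n' where "n' \<in> dualS" "n = mult_e + n'" unfolding shifted_dualS_def by blast
    then obtain a where a: "a \<in> colon R m" "a \<noteq> 0" "v a = n - mult_e"
      unfolding dualS_iff by auto
    have "x * a * b \<in> smul_set x R" if "b \<in> m" for b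
    proof -
      have "a * b \<in> R" using a(1) that unfolding colon_iff by blast
      thus ?thesis unfolding smul_set_def by (auto simp: mult.assoc)
    qed
    hence "x * a \<in> colon (smul_set x R) m" unfolding colon_iff by blast
    moreover have "x * a \<noteq> 0" "v (x * a) = n" using a assms val_mult by auto
    ultimately show "n \<in> valset v (colon (smul_set x R) m)" unfolding valset_iff by blast
  qed
qed

lemma valset_colon_smul_zero: "valset v (colon (smul_set 0 R) m) = {}"
proof -
  obtain x where x: "x \<in> m" "x \<noteq> 0" using ex_m_val_mult_e by blast
  have "smul_set 0 R = {0}" unfolding smul_set_def using R_zero by force
  have "a = 0" if "a \<in> colon (smul_set 0 R) m" for a
    using that x \<open>smul_set 0 R = {0}\<close> unfolding colon_iff by auto
  hence "colon (smul_set 0 R) m \<subseteq> {0}" by blast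
  thus ?thesis unfolding valset_def by blast
qed

text \<open>If y + s \<ge> c + e for every gap s, then (b/x) m \<subseteq> R for b \<in> R of value y: the approximation
lemma reduces this to the values of m, which are either gaps (then the product has value at least
c) or of the form e + s with s \<in> valS (realised by x r with r \<in> R, and (b/x)(x r) = b r \<in> R).\<close>

lemma in_shifted_dualS_if_large:
  assumes x: "x \<in> m" "x \<noteq> 0" "v x = mult_e"
    and y: "y \<in> valS" "mult_e \<le> y"
    and large: "\<forall>s\<in>gaps x. conductor + mult_e \<le> y + s"
  shows "y \<in> shifted_dualS"
proof -
  obtain b where b: "b \<in> R" "b \<noteq> 0" "v b = y" using y valS_iff by blast
  define a where "a = b / x"
  have a0: "a \<noteq> 0" and va: "v a = y - mult_e" unfolding a_def using b x val_divide by auto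
  have xR: "x \<in> R" using x m_subset_R by blast
  define N where "N = {z \<in> m. a * z \<in> R}"
  have aR: "a * z \<in> R" if "z \<noteq> 0" "conductor + mult_e \<le> y + v z" for z
  proof -
    have "conductor \<le> v (a * z)" using val_mult[OF a0 that(1)] va that by simp
    thus ?thesis using val_ge_conductor_subset unfolding val_ge_def by blast
  qed
  have "m \<subseteq> N"
  proof (rule subset_if_valset_subset)
    show "submod R N" unfolding N_def submod_def
      using submodD[OF submod_m] R_zero R_add R_mult
      by (auto simp: distrib_left mult.left_commute)
    show "submod R m" by (rule submod_m)
    show "N \<subseteq> m" unfolding N_def by blast
    show "val_ge v (conductor + mult_e) \<subseteq> N"
    proof
      fix z assume z: "z \<in> val_ge v (conductor + mult_e)"
      show "z \<in> N"
      proof (cases "z = 0")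
        case True thus ?thesis unfolding N_def using submodD(1)[OF submod_m] R_zero by simp
      next
        case False
        hence vz: "conductor + mult_e \<le> v z" using z unfolding val_ge_def by simp
        hence "z \<in> R" using val_ge_conductor_subset mult_e_pos unfolding val_ge_def by force
        hence "z \<in> m" using in_m_if_pos_val vz conductor_nonneg mult_e_pos by simp
        moreover have "conductor + mult_e \<le> y + v z" using vz y(2) mult_e_pos by linarith
        hence "a * z \<in> R" by (rule aR[OF False])
        ultimately show ?thesis unfolding N_def by blast
      qed
    qed
    show "valset v m \<subseteq> valset v N"
    proof
      fix n assume "n \<in> valset v m"
      then obtain z where zm: "z \<in> m" and z0: "z \<noteq> 0" and vz: "v z = n" unfolding valset_iff by blast
      note zS = val_m(1)[OF zm z0] and ez = val_m(2)[OF zm z0]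
      show "n \<in> valset v N"
      proof (cases "v z < conductor \<and> v z - mult_e \<in> valS")
        case True
        then obtain r where r: "r \<in> R" "r \<noteq> 0" "v r = v z - mult_e" using valS_iff by blast
        have xr: "x * r \<in> R" "x * r \<noteq> 0" "v (x * r) = v z" using R_mult xR r x val_mult by auto
        hence "x * r \<in> m" using in_m_if_pos_val mult_e_pos ez by simp
        moreover have "a * (x * r) \<in> R"
        proof -
          have "a * (x * r) = b * r" unfolding a_def using x by simp
          thus ?thesis using R_mult[OF b(1) r(1)] by (simp only:)
        qed
        ultimately have "x * r \<in> N" unfolding N_def by blast
        thus ?thesis unfolding valset_iff using xr vz by blast
      next
        case False
        have "conductor + mult_e \<le> y + v z"
        proof (cases "v z < conductor")
          case True
          hence "v z \<in> gaps x"
            using False zS mult_e_pos ez apery_below_subset_gaps[OF x(3)] by auto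
          thus ?thesis using large by blast
        qed (use y in simp)
        hence "z \<in> N" using aR z0 zm unfolding N_def by blast
        thus ?thesis unfolding valset_iff using z0 vz by blast
      qed
    qed
  qed
  hence "a \<in> colon R m" unfolding N_def colon_iff by blast
  hence "y - mult_e \<in> dualS" unfolding dualS_iff using a0 va by blast
  thus ?thesis unfolding shifted_dualS_def by force
qed

lemma valS_diff_shifted_subset_gaps:
  assumes "v x = mult_e"
  shows "valS - shifted_dualS \<subseteq> insert 0 (gaps x)"
proof
  fix s assume s: "s \<in> valS - shifted_dualS"
  show "s \<in> insert 0 (gaps x)"
  proof (cases "s = 0")
    case False
    hence "0 < s" using s valS_nonneg by force
    thus ?thesis using s valS_diff_shifted_subset apery_below_subset_gaps[OF assms] by blast
  qed simp
qed

lemma card_valS_diff_shifted_eq_iff: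
  assumes "v x = mult_e"
  shows "card (valS - shifted_dualS) = Suc (card (gaps x)) \<longleftrightarrow> valS - shifted_dualS = insert 0 (gaps x)"
proof
  note card = card_insert_zero_gaps[of x]
  {
    assume "card (valS - shifted_dualS) = Suc (card (gaps x))"
    thus "valS - shifted_dualS = insert 0 (gaps x)"
      using card_subset_eq[OF _ valS_diff_shifted_subset_gaps[OF assms]] finite_gaps card by simp
  next
    assume "valS - shifted_dualS = insert 0 (gaps x)"
    thus "card (valS - shifted_dualS) = Suc (card (gaps x))" using card by simp
  }
qed

text \<open>When x = 0 (which v x = e allows, since v 0 is arbitrary) the module C + xR is C and all
values between 0 and c are gaps.\<close>

lemma mult_e_in_gaps_zero:
  assumes "gaps 0 \<noteq> {}"
  shows "mult_e \<in> gaps 0"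
proof -
  obtain s where "s \<in> gaps 0" using assms by blast
  hence "mult_e < conductor" using gaps_bounds[of s 0] by linarith
  moreover have "conductor_plus 0 = val_ge v conductor"
    unfolding set_eq_iff conductor_plus_iff using R_zero by auto
  ultimately show ?thesis
    using mult_e_in_valS mult_e_pos valset_val_ge unfolding gaps_def by auto
qed

lemma mult_e_notin_valS_diff_shifted: "mult_e \<notin> valS - shifted_dualS"
proof
  assume "mult_e \<in> valS - shifted_dualS"
  hence "mult_e - mult_e \<notin> valS" using valS_diff_shifted_subset by blast
  thus False using zero_in_valS by simp
qed

lemma card_valS_diff_shifted_eq_iff_colon:
  assumes "v x = mult_e" and "gaps x \<noteq> {}"
  shows "card (valS - shifted_dualS) = Suc (card (gaps x))
    \<longleftrightarrow> valS - valset v (colon (smul_set x R) m) = insert 0 (gaps x)"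
proof (cases "x = 0")
  case False
  thus ?thesis using valset_colon_smul card_valS_diff_shifted_eq_iff assms(1) by simp
next
  case True
  hence "valS - shifted_dualS \<noteq> insert 0 (gaps x)"
    using mult_e_in_gaps_zero mult_e_notin_valS_diff_shifted assms(2) by blast
  moreover have "valS \<noteq> insert 0 (gaps x)" using infinite_valS finite_gaps by (metis finite_insert)
  ultimately show ?thesis
    using True valset_colon_smul_zero card_valS_diff_shifted_eq_iff[OF assms(1)] by simp
qed

lemma two_Min_gaps_lt:
  assumes x: "x \<in> m" "v x = mult_e" and card: "1 < card (valS - shifted_dualS)"
  shows "gaps x \<noteq> {}" and "2 * Min (gaps x) < conductor + mult_e"
proof -
  have "\<not> valS - shifted_dualS \<subseteq> {0}"
  proof
    assume "valS - shifted_dualS \<subseteq> {0}"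
    hence "card (valS - shifted_dualS) \<le> card {0::int}" by (intro card_mono) simp_all
    thus False using card by simp
  qed
  then obtain s where s: "s \<in> valS - shifted_dualS" "s \<noteq> 0" by blast
  hence s_gap: "s \<in> gaps x" using valS_diff_shifted_subset_gaps[OF x(2)] by blast
  thus "gaps x \<noteq> {}" by blast
  have Min_le: "Min (gaps x) \<le> t" if "t \<in> gaps x" for t using finite_gaps that by simp
  show "2 * Min (gaps x) < conductor + mult_e"
  proof (cases "x = 0")
    case True
    hence e_gap: "mult_e \<in> gaps x" using mult_e_in_gaps_zero s_gap by blast
    have "Min (gaps x) = mult_e"
      by (rule Min_eqI[OF finite_gaps]) (use e_gap gaps_bounds(1) in auto)
    thus ?thesis using gaps_bounds(2)[OF e_gap] by simp
  next
    case False
    show ?thesis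
    proof (rule ccontr)
      assume "\<not> ?thesis"
      hence "\<forall>t\<in>gaps x. conductor + mult_e \<le> s + t"
        using Min_le[OF s_gap] Min_le by (smt (verit))
      hence "s \<in> shifted_dualS"
        using in_shifted_dualS_if_large[OF x(1) False x(2)] s gaps_bounds(1)[OF s_gap] by blast
      thus False using s by blast
    qed
  qed
qed

lemma Min_gaps_add_lt:
  assumes x: "x \<in> m" "v x = mult_e"
    and card: "card (valS - shifted_dualS) = Suc (card (gaps x))" and s: "s \<in> gaps x"
  shows "Min (gaps x) + s < conductor + mult_e"
proof -
  have eq: "valS - shifted_dualS = insert 0 (gaps x)"
    using card_valS_diff_shifted_eq_iff[OF x(2)] card by blast
  show ?thesis
  proof (cases "x = 0")
    case True
    hence "mult_e \<in> gaps x" using mult_e_in_gaps_zero s by blast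
    thus ?thesis using eq mult_e_notin_valS_diff_shifted by blast
  next
    case False
    show ?thesis
    proof (rule ccontr)
      assume "\<not> ?thesis"
      hence "\<forall>t\<in>gaps x. conductor + mult_e \<le> s + t"
        using Min_le[OF finite_gaps] by (smt (verit))
      hence "s \<in> shifted_dualS"
        using in_shifted_dualS_if_large[OF x(1) False x(2)] s eq gaps_bounds(1)[OF s] by blast
      thus False using eq s by blast
    qed
  qed
qed

end

theorem proposition1p11:
  fixes R m :: "'a::field set" and v :: "'a \<Rightarrow> int" and x :: 'a
  assumes subring: "subring R"
    and quot_field: "quotient_field_is_K R"
    and noeth: "noetherian R"
    and dim1: "krull_dim_one R"
    and local: "local_ring R m"
    and dval: "discrete_valuation v"
    and int_closure: "\<forall>a. integral_over R a \<longleftrightarrow> a \<in> val_ring v"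
    and finite_closure: "\<exists>F. finite F \<and> F \<subseteq> val_ring v \<and> val_ring v = gen_by R F"
    and res_rat: "residually_rational R v"
    and not_regular: "\<not> (\<exists>a\<in>m. m = smul_set a R)"
  defines "vR \<equiv> valset v R"
  defines "C \<equiv> colon R (val_ring v)"
  defines "e \<equiv> (LEAST e. e \<in> vR \<and> 0 < e)"
  defines "c \<equiv> (LEAST c. c \<in> vR \<and> (\<forall>n::nat. c + int n \<in> vR))"
  defines "r \<equiv> mod_length R (colon R m) R"
  assumes x_in: "x \<in> m" and vx: "v x = e"
  defines "k \<equiv> mod_length R R (sum_set C (smul_set x R))"
  defines "xRm \<equiv> colon (smul_set x R) m"
  defines "Y \<equiv> {y \<in> vR. 0 < y \<and> y \<notin> valset v (sum_set C (smul_set x R))}"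
  defines "y \<equiv> (\<lambda>i::nat. sorted_list_of_set Y ! (i - 1))"
  defines "p \<equiv> (THE p::int. c - e \<le> p * e \<and> p * e < c)"
  defines "h \<equiv> (p + 1) * e - c"
  defines "l \<equiv> (\<lambda>i::nat. THE l::int. 0 \<le> l \<and> y i + l * e < c \<and> c \<le> y i + (l + 1) * e)"
  assumes k_gt1: "k > 1"
  shows "(int r = e - int k \<longleftrightarrow> vR - valset v xRm = insert 0 (y ` {1..k-1}))
       \<and> (int r < e - 1 \<longrightarrow>
            2 * y 1 < c + e \<and> p \<le> 2 * l 1 + 2 \<and> (p = 2 * l 1 + 2 \<longrightarrow> 0 < h))
       \<and> (int r = e - int k \<longrightarrow>
            (\<forall>j\<in>{1..k-1}. y 1 + y j < c + e) \<and> p \<le> l 1 + l (k - 1) + 2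
            \<and> (p = l 1 + l (k - 1) + 2 \<longrightarrow> 0 < h))
       \<and> (3 \<le> p \<longrightarrow> (\<forall>i\<in>{1..k-1}. l i = 0 \<longrightarrow> c + e < 2 * y i))"
proof -
  interpret analytically_irreducible v R m
    by unfold_locales (fact dval subring quot_field local int_closure finite_closure res_rat)+
  have vR: "vR = valS" and e: "e = mult_e" and c: "c = conductor"
    unfolding vR_def e_def c_def valS_def mult_e_def conductor_def by simp_all
  have CxR: "sum_set C (smul_set x R) = conductor_plus x"
    unfolding C_def colon_val_ring_eq conductor_plus_def ..
  have Y: "Y = gaps x" unfolding Y_def CxR vR gaps_def ..
  have k: "k = Suc (card Y)"
    using mod_length_conductor_plus[of x] valS_diff_conductor_plus[OF x_in] x_in m_subset_R k_gt1
      card_insert_zero_gaps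
    unfolding k_def CxR Y by (auto split: if_splits)
  have r: "int r = e - int (card (valS - shifted_dualS))"
    using card_valS_diff_shifted mod_length_colon_m unfolding r_def e by simp
  have e_pos: "0 < e" and vx': "v x = mult_e" using mult_e_pos vx e by simp_all
  have Y_ne: "Y \<noteq> {}" using k k_gt1 by auto
  have y_img: "y ` {1..k-1} = Y" and y1: "y 1 = Min Y"
    using sorted_list_of_set_nth_image[of Y] sorted_list_of_set_nonempty[of Y] finite_gaps Y_ne k
    unfolding y_def Y by simp_all
  have y_Y: "y i \<in> Y" if "i \<in> {1..k-1}" for i using y_img that by blast
  have l: "0 \<le> l i \<and> y i + l i * e < c \<and> c \<le> y i + (l i + 1) * e" if "i \<in> {1..k-1}" for i
    unfolding l_def using floor_quotient_offset[OF e_pos] gaps_bounds(2) y_Y[OF that] Y c by blast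
  have p: "c - e \<le> p * e \<and> p * e < c" unfolding p_def by (rule theI'[OF floor_quotient_unique[OF e_pos]])
  have ends: "1 \<in> {1..k-1}" "k - 1 \<in> {1..k-1}" using k_gt1 by auto
  have "int r = e - int k \<longleftrightarrow> card (valS - shifted_dualS) = Suc (card Y)"
    using r k by presburger
  hence part1: "int r = e - int k \<longleftrightarrow> vR - valset v xRm = insert 0 (y ` {1..k-1})"
    using card_valS_diff_shifted_eq_iff_colon[OF vx'] Y_ne unfolding xRm_def y_img vR Y by simp
  have part2: "2 * y 1 < c + e \<and> p \<le> 2 * l 1 + 2 \<and> (p = 2 * l 1 + 2 \<longrightarrow> 0 < h)"
    if "int r < e - 1"
  proof -
    have y1_lt: "2 * y 1 < c + e" using two_Min_gaps_lt[OF x_in vx'] that r y1 Y c e by simp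
    have "p \<le> l 1 + l 1 + 2 \<and> (p = l 1 + l 1 + 2 \<longrightarrow> 0 < (p + 1) * e - c)"
      by (rule floor_quotient_le_sum[OF e_pos, of p c "y 1" "l 1" "y 1" "l 1"])
        (use p l[OF ends(1)] y1_lt in auto)
    thus ?thesis using y1_lt unfolding h_def mult_2 by blast
  qed
  have part3: "(\<forall>j\<in>{1..k-1}. y 1 + y j < c + e) \<and> p \<le> l 1 + l (k - 1) + 2
      \<and> (p = l 1 + l (k - 1) + 2 \<longrightarrow> 0 < h)" if "int r = e - int k"
  proof -
    have sums: "\<forall>j\<in>{1..k-1}. y 1 + y j < c + e"
      using Min_gaps_add_lt[OF x_in vx'] that y_Y y1 r k Y c e by simp
    have "p \<le> l 1 + l (k - 1) + 2 \<and> (p = l 1 + l (k - 1) + 2 \<longrightarrow> 0 < (p + 1) * e - c)"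
      by (rule floor_quotient_le_sum[OF e_pos, of p c "y 1" "l 1" "y (k - 1)" "l (k - 1)"])
        (use p l[OF ends(1)] l[OF ends(2)] sums ends(2) in auto)
    thus ?thesis using sums unfolding h_def by blast
  qed
  have part4: "c + e < 2 * y i" if "3 \<le> p" "i \<in> {1..k-1}" "l i = 0" for i
  proof -
    have "c \<le> y i + e" using l[OF that(2)] that(3) by simp
    thus ?thesis using double_gt_if_floor_quotient_ge_3[OF e_pos that(1)] p by blast
  qed
  show ?thesis using part1 part2 part3 part4 by blast
qed

end
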